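(* Every Hopf heap $(C,\chi)$ admits a Grunspan map; explicitly $\vartheta(c)=\sum[c_{(1)},[e_{(1)},c_{(3)},c_{(2)}],e_{(2)}]$ for all $c\in C$, where $e\in C$ is any element with $\varepsilon(e)=1$.
   Context: Work over a field $\mathbb{F}$; coalgebras coassociative, counital, of dimension at least one, Sweedler notation; $C^{\mathrm{co}}$ is the co-opposite coalgebra. A Hopf heap is a coalgebra $C$ with a coalgebra map $\chi:C\otimes C^{\mathrm{co}}\otimes C\to C$, $a\otimes b\otimes c\mapsto[a,b,c]$ (so $\Delta[a,b,c]=\sum[a_{(1)},b_{(2)},c_{(1)}]\otimes[a_{(2)},b_{(1)},c_{(2)}]$, $\varepsilon[a,b,c]=\varepsilon(a)\varepsilon(b)\varepsilon(c)$), such that $[[a,b,c],d,e]=[a,b,[c,d,e]]$ and $\sum[c_{(1)},c_{(2)},a]=\sum[a,c_{(1)},c_{(2)}]=\varepsilon(c)a$ for all $a,b,c,d,e\in C$. A Grunspan map is a coalgebra map $\vartheta:C\to C$ with $[[a,b,\vartheta(c)],d,e]=[a,[d,c,b],e]$ for all $a,b,c,d,e\in C$. *)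

theory Defs
  imports Main "HOL.Vector_Spaces"
begin

text \<open>
Elements of C (x) C (resp. C (x) C (x) C) are
represented by finite lists of pairs (resp. triples), i.e. finite sums of simple
tensors; two such lists denote the same tensor iff every bilinear (resp. trilinear)
form C x C -> F (resp. C x C x C -> F) takes the same value on them (the dual of a
tensor product separates points).  Linear maps out of tensor products are
represented by multilinear maps.  The comultiplication is given as a function
Delta :: 'v => ('v * 'v) list, with Delta c a Sweedler representation of the
coproduct of c.
\<close>

definition lin_form :: "('f::field \<Rightarrow> 'v::ab_group_add \<Rightarrow> 'v) \<Rightarrow> ('v \<Rightarrow> 'f) \<Rightarrow> bool" where
  "lin_form sc f \<longleftrightarrow> (\<forall>x y. f (x + y) = f x + f y) \<and> (\<forall>a x. f (sc a x) = a * f x)"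

definition lin_map :: "('f::field \<Rightarrow> 'v::ab_group_add \<Rightarrow> 'v) \<Rightarrow> ('v \<Rightarrow> 'v) \<Rightarrow> bool" where
  "lin_map sc f \<longleftrightarrow> (\<forall>x y. f (x + y) = f x + f y) \<and> (\<forall>a x. f (sc a x) = sc a (f x))"

definition bil_form :: "('f::field \<Rightarrow> 'v::ab_group_add \<Rightarrow> 'v) \<Rightarrow> ('v \<Rightarrow> 'v \<Rightarrow> 'f) \<Rightarrow> bool" where
  "bil_form sc B \<longleftrightarrow> (\<forall>x. lin_form sc (B x)) \<and> (\<forall>y. lin_form sc (\<lambda>x. B x y))"

definition tril_form :: "('f::field \<Rightarrow> 'v::ab_group_add \<Rightarrow> 'v) \<Rightarrow> ('v \<Rightarrow> 'v \<Rightarrow> 'v \<Rightarrow> 'f) \<Rightarrow> bool" where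
  "tril_form sc T \<longleftrightarrow> (\<forall>x y. lin_form sc (T x y)) \<and> (\<forall>x z. lin_form sc (\<lambda>y. T x y z))
     \<and> (\<forall>y z. lin_form sc (\<lambda>x. T x y z))"

definition tril_map :: "('f::field \<Rightarrow> 'v::ab_group_add \<Rightarrow> 'v) \<Rightarrow> ('v \<Rightarrow> 'v \<Rightarrow> 'v \<Rightarrow> 'v) \<Rightarrow> bool" where
  "tril_map sc T \<longleftrightarrow> (\<forall>x y. lin_map sc (T x y)) \<and> (\<forall>x z. lin_map sc (\<lambda>y. T x y z))
     \<and> (\<forall>y z. lin_map sc (\<lambda>x. T x y z))"

definition tensor2_eq :: "('f::field \<Rightarrow> 'v::ab_group_add \<Rightarrow> 'v) \<Rightarrow> ('v \<times> 'v) list \<Rightarrow> ('v \<times> 'v) list \<Rightarrow> bool" where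
  "tensor2_eq sc xs ys \<longleftrightarrow> (\<forall>B. bil_form sc B \<longrightarrow>
      sum_list (map (\<lambda>(x, y). B x y) xs) = sum_list (map (\<lambda>(x, y). B x y) ys))"

definition tensor3_eq :: "('f::field \<Rightarrow> 'v::ab_group_add \<Rightarrow> 'v) \<Rightarrow> ('v \<times> 'v \<times> 'v) list \<Rightarrow> ('v \<times> 'v \<times> 'v) list \<Rightarrow> bool" where
  "tensor3_eq sc xs ys \<longleftrightarrow> (\<forall>T. tril_form sc T \<longrightarrow>
      sum_list (map (\<lambda>(x, y, z). T x y z) xs) = sum_list (map (\<lambda>(x, y, z). T x y z) ys))"

text \<open>(Delta (x) id) Delta c = sum c_(1) (x) c_(2) (x) c_(3), and (id (x) Delta) Delta c.\<close>
definition delta3L :: "('v \<Rightarrow> ('v \<times> 'v) list) \<Rightarrow> 'v \<Rightarrow> ('v \<times> 'v \<times> 'v) list" where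
  "delta3L D c = concat (map (\<lambda>(x, y). map (\<lambda>(x1, x2). (x1, x2, y)) (D x)) (D c))"

definition delta3R :: "('v \<Rightarrow> ('v \<times> 'v) list) \<Rightarrow> 'v \<Rightarrow> ('v \<times> 'v \<times> 'v) list" where
  "delta3R D c = concat (map (\<lambda>(x, y). map (\<lambda>(y1, y2). (x, y1, y2)) (D y)) (D c))"

definition coalgebra :: "('f::field \<Rightarrow> 'v::ab_group_add \<Rightarrow> 'v) \<Rightarrow> ('v \<Rightarrow> ('v \<times> 'v) list) \<Rightarrow> ('v \<Rightarrow> 'f) \<Rightarrow> bool" where
  "coalgebra sc D eps \<longleftrightarrow>
     vector_space sc \<and> (\<exists>c::'v. c \<noteq> 0) \<and>
     lin_form sc eps \<and>
     (\<forall>x y. tensor2_eq sc (D (x + y)) (D x @ D y)) \<and>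
     (\<forall>a x. tensor2_eq sc (D (sc a x)) (map (\<lambda>(u, v). (sc a u, v)) (D x))) \<and>
     (\<forall>c. tensor3_eq sc (delta3L D c) (delta3R D c)) \<and>
     (\<forall>c. sum_list (map (\<lambda>(x, y). sc (eps x) y) (D c)) = c) \<and>
     (\<forall>c. sum_list (map (\<lambda>(x, y). sc (eps y) x) (D c)) = c)"

definition coalg_map :: "('f::field \<Rightarrow> 'v::ab_group_add \<Rightarrow> 'v) \<Rightarrow> ('v \<Rightarrow> ('v \<times> 'v) list) \<Rightarrow> ('v \<Rightarrow> 'f) \<Rightarrow> ('v \<Rightarrow> 'v) \<Rightarrow> bool" where
  "coalg_map sc D eps f \<longleftrightarrow> lin_map sc f \<and>
     (\<forall>c. tensor2_eq sc (D (f c)) (map (\<lambda>(x, y). (f x, f y)) (D c))) \<and>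
     (\<forall>c. eps (f c) = eps c)"

text \<open>Hopf heap: chi is a trilinear map C x C x C -> C, i.e. a linear map
C (x) C^co (x) C -> C, which is a coalgebra map.\<close>
definition hopf_heap :: "('f::field \<Rightarrow> 'v::ab_group_add \<Rightarrow> 'v) \<Rightarrow> ('v \<Rightarrow> ('v \<times> 'v) list) \<Rightarrow> ('v \<Rightarrow> 'f)
     \<Rightarrow> ('v \<Rightarrow> 'v \<Rightarrow> 'v \<Rightarrow> 'v) \<Rightarrow> bool" where
  "hopf_heap sc D eps br \<longleftrightarrow>
     coalgebra sc D eps \<and> tril_map sc br \<and>
     (\<forall>a b c. tensor2_eq sc (D (br a b c))
        (concat (map (\<lambda>(a1, a2). concat (map (\<lambda>(b1, b2). map (\<lambda>(c1, c2).
            (br a1 b2 c1, br a2 b1 c2)) (D c)) (D b))) (D a)))) \<and>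
     (\<forall>a b c. eps (br a b c) = eps a * eps b * eps c) \<and>
     (\<forall>a b c d e. br (br a b c) d e = br a b (br c d e)) \<and>
     (\<forall>a c. sum_list (map (\<lambda>(c1, c2). br c1 c2 a) (D c)) = sc (eps c) a) \<and>
     (\<forall>a c. sum_list (map (\<lambda>(c1, c2). br a c1 c2) (D c)) = sc (eps c) a)"

definition grunspan_map :: "('f::field \<Rightarrow> 'v::ab_group_add \<Rightarrow> 'v) \<Rightarrow> ('v \<Rightarrow> ('v \<times> 'v) list) \<Rightarrow> ('v \<Rightarrow> 'f)
     \<Rightarrow> ('v \<Rightarrow> 'v \<Rightarrow> 'v \<Rightarrow> 'v) \<Rightarrow> ('v \<Rightarrow> 'v) \<Rightarrow> bool" where
  "grunspan_map sc D eps br th \<longleftrightarrow> coalg_map sc D eps th \<and>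
     (\<forall>a b c d e. br (br a b (th c)) d e = br a (br d c b) e)"

definition grunspan_formula :: "('v::ab_group_add \<Rightarrow> ('v \<times> 'v) list) \<Rightarrow> ('v \<Rightarrow> 'v \<Rightarrow> 'v \<Rightarrow> 'v) \<Rightarrow> 'v \<Rightarrow> 'v \<Rightarrow> 'v" where
  "grunspan_formula D br e c = sum_list (concat (map (\<lambda>(c1, c2, c3).
      map (\<lambda>(e1, e2). br c1 (br e1 c3 c2) e2) (D e)) (delta3L D c)))"

end

theory Submission
  imports Defs
begin

text \<open>Fix \<open>e\<close> with \<open>\<epsilon>(e) = 1\<close> (one exists because \<open>C \<noteq> 0\<close> and \<open>c = \<Sum>\<epsilon>(c\<^sub>(\<^sub>1\<^sub>))c\<^sub>(\<^sub>2\<^sub>)\<close>)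
  and let \<open>\<theta>(c) = \<Sum>[c\<^sub>(\<^sub>1\<^sub>), [e\<^sub>(\<^sub>1\<^sub>), c\<^sub>(\<^sub>3\<^sub>), c\<^sub>(\<^sub>2\<^sub>)], e\<^sub>(\<^sub>2\<^sub>)]\<close>. Associativity, the
  collapse axioms and the fact that the bracket is a coalgebra map give the cancellation law
  \<open>\<Sum>[w, y\<^sub>(\<^sub>2\<^sub>), \<theta>(y\<^sub>(\<^sub>1\<^sub>))] = \<epsilon>(y)w\<close>. The Grunspan identity
  \<open>[p, [x, y, q], z] = [[p, q, \<theta>(y)], x, z]\<close> then follows by evaluating one sum over the
  threefold coproducts of \<open>x, y, q\<close> in two ways: the cancellation law turns it into the
  left-hand side, while reassociating and collapsing \<open>\<Delta>[x, y, q]\<close> turns it into the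
  right-hand side. Finally \<open>\<theta>\<close> preserves the counit by direct computation, and the
  Grunspan identity is exactly what is needed to see that it preserves the coproduct.\<close>

lemma (in vector_space) eq_if_lin_forms_agree:
  assumes agree: "\<And>\<phi>. lin_form scale \<phi> \<Longrightarrow> \<phi> x = \<phi> y"
  shows "x = y"
proof (rule ccontr)
  assume "x \<noteq> y"
  then have ind: "independent {x - y}" by (simp add: independent_insert span_empty)
  interpret field_space: vector_space "(*) :: 'a \<Rightarrow> 'a \<Rightarrow> 'a"
    by unfold_locales (auto simp: algebra_simps)
  interpret pair: vector_space_pair scale "(*) :: 'a \<Rightarrow> 'a \<Rightarrow> 'a" by unfold_locales
  define \<phi> where "\<phi> = pair.construct {x - y} (\<lambda>_. 1)"
  have lin: "Vector_Spaces.linear scale (*) \<phi>"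
    unfolding \<phi>_def using pair.linear_construct[OF ind] by blast
  then have "lin_form scale \<phi>" by (simp add: lin_form_def linear_iff)
  then have "\<phi> (x - y) = 0" using agree pair.linear_diff[OF lin] by simp
  moreover have "\<phi> (x - y) = 1" unfolding \<phi>_def by (rule pair.construct_basis[OF ind]) simp
  ultimately show False by simp
qed

lemma sum_list_concat: "sum_list (concat xss) = sum_list (map sum_list xss)"
  by (induction xss) auto

lemma sum_list_map_swap:
  fixes f :: "'a \<Rightarrow> 'c \<Rightarrow> 'b::comm_monoid_add"
  shows "sum_list (map (\<lambda>a. sum_list (map (f a) ys)) xs)
       = sum_list (map (\<lambda>b. sum_list (map (\<lambda>a. f a b) xs)) ys)"
  by (induction xs) (simp_all add: sum_list_addf)

text \<open>\<open>sw D c (\<lambda>c\<^sub>1 c\<^sub>2. f c\<^sub>1 c\<^sub>2)\<close> is the Sweedler sum \<open>\<Sum> f c\<^sub>(\<^sub>1\<^sub>) c\<^sub>(\<^sub>2\<^sub>)\<close>; iterated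
  coproducts become nested binders, and coassociativity becomes a rebracketing of binders.\<close>

definition sw :: "('v \<Rightarrow> ('v \<times> 'v) list) \<Rightarrow> 'v \<Rightarrow> ('v \<Rightarrow> 'v \<Rightarrow> 'b::comm_monoid_add) \<Rightarrow> 'b" where
  "sw D c f = (\<Sum>(x, y)\<leftarrow>D c. f x y)"

lemma sw_cong: "(\<And>x y. f x y = g x y) \<Longrightarrow> sw D c f = sw D c g"
  by (simp add: sw_def)

lemma sw_add: "sw D c (\<lambda>x y. f x y + g x y) = sw D c f + sw D c g"
  unfolding sw_def by (simp add: sum_list_addf case_prod_beta')

lemma sw_swap: "sw D a (\<lambda>x y. sw D b (F x y)) = sw D b (\<lambda>u v. sw D a (\<lambda>x y. F x y u v))"
  unfolding sw_def
  using sum_list_map_swap[of "\<lambda>p q. F (fst p) (snd p) (fst q) (snd q)" "D b" "D a"]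
  by (simp add: case_prod_beta')

lemma sw_push_inside3:
  "sw D a (\<lambda>x y. sw D b (\<lambda>u v. sw D c (F x y u v)))
 = sw D b (\<lambda>u v. sw D c (\<lambda>s t. sw D a (\<lambda>x y. F x y u v s t)))"
  by (subst sw_swap) (rule sw_cong, rule sw_swap)

lemma sw_pull_outside3:
  "sw D a (\<lambda>x y. sw D b (\<lambda>u v. sw D c (F x y u v)))
 = sw D c (\<lambda>s t. sw D a (\<lambda>x y. sw D b (\<lambda>u v. F x y u v s t)))"
  by (subst sw_push_inside3) (subst sw_push_inside3, rule refl)

lemma sw_push_inside4:
  "sw D a (\<lambda>x1 x2. sw D b (\<lambda>y1 y2. sw D c (\<lambda>z1 z2. sw D d (F x1 x2 y1 y2 z1 z2))))
 = sw D b (\<lambda>y1 y2. sw D c (\<lambda>z1 z2. sw D d (\<lambda>w1 w2. sw D a (\<lambda>x1 x2. F x1 x2 y1 y2 z1 z2 w1 w2))))"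
  by (subst sw_swap) (rule sw_cong, rule sw_push_inside3)

lemma sw_push_block_inside3:
  "sw D a (\<lambda>x1 x2. sw D (b x1 x2) (\<lambda>y1 y2. sw D (c x1 x2) (\<lambda>z1 z2.
     sw D d (\<lambda>u1 u2. sw D f (\<lambda>v1 v2. sw D g (F x1 x2 y1 y2 z1 z2 u1 u2 v1 v2))))))
 = sw D d (\<lambda>u1 u2. sw D f (\<lambda>v1 v2. sw D g (\<lambda>w1 w2. sw D a (\<lambda>x1 x2. sw D (b x1 x2) (\<lambda>y1 y2.
     sw D (c x1 x2) (\<lambda>z1 z2. F x1 x2 y1 y2 z1 z2 u1 u2 v1 v2 w1 w2))))))"
  by (subst sw_push_inside4[where a="c _ _"], subst sw_push_inside4[where a="b _ _"],
      subst sw_push_inside4[where a=a]) (rule refl)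

definition bil_map :: "('f::field \<Rightarrow> 'v::ab_group_add \<Rightarrow> 'v) \<Rightarrow> ('v \<Rightarrow> 'v \<Rightarrow> 'v) \<Rightarrow> bool" where
  "bil_map sc f \<longleftrightarrow> (\<forall>x. lin_map sc (f x)) \<and> (\<forall>y. lin_map sc (\<lambda>x. f x y))"

named_theorems lin_intros

locale coalgebra_space =
  fixes sc :: "'f::field \<Rightarrow> 'v::ab_group_add \<Rightarrow> 'v"
    and D :: "'v \<Rightarrow> ('v \<times> 'v) list" and eps :: "'v \<Rightarrow> 'f"
  assumes coalgebra: "coalgebra sc D eps"
begin

sublocale vs: vector_space sc
  using coalgebra by (simp add: coalgebra_def)

abbreviation lin :: "('v \<Rightarrow> 'v) \<Rightarrow> bool" where
  "lin f \<equiv> lin_map sc f"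

lemma lin_add: "lin f \<Longrightarrow> f (x + y) = f x + f y"
  by (simp add: lin_map_def)

lemma lin_scale: "lin f \<Longrightarrow> f (sc a x) = sc a (f x)"
  by (simp add: lin_map_def)

lemma lin_zero: "lin f \<Longrightarrow> f 0 = 0"
  using lin_scale[of f 0 0] by simp

lemma lin_sum_list: "lin f \<Longrightarrow> f (sum_list xs) = sum_list (map f xs)"
  by (induction xs) (simp_all add: lin_zero lin_add)

lemma lin_form_zero: "lin_form sc \<phi> \<Longrightarrow> \<phi> 0 = 0"
  unfolding lin_form_def using vs.scale_zero_left[of 0] by (metis mult_zero_left)

lemma lin_form_sum_list: "lin_form sc \<phi> \<Longrightarrow> \<phi> (sum_list xs) = sum_list (map \<phi> xs)"
  by (induction xs) (simp_all add: lin_form_zero, simp add: lin_form_def)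

lemma lin_form_comp: "lin_form sc \<phi> \<Longrightarrow> lin f \<Longrightarrow> lin_form sc (\<lambda>x. \<phi> (f x))"
  by (simp add: lin_form_def lin_map_def)

lemma lin_id [lin_intros]: "lin (\<lambda>x. x)"
  by (simp add: lin_map_def)

lemma lin_scale_fun [lin_intros]: "lin g \<Longrightarrow> lin (\<lambda>x. sc a (g x))"
  by (simp add: lin_map_def vs.scale_right_distrib vs.scale_left_commute)

lemma bil_mapI [lin_intros]: "(\<And>x. lin (f x)) \<Longrightarrow> (\<And>y. lin (\<lambda>x. f x y)) \<Longrightarrow> bil_map sc f"
  by (simp add: bil_map_def)

lemma tril_mapI [lin_intros]:
  "(\<And>x y. lin (f x y)) \<Longrightarrow> (\<And>x z. lin (\<lambda>y. f x y z)) \<Longrightarrow> (\<And>y z. lin (\<lambda>x. f x y z))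
   \<Longrightarrow> tril_map sc f"
  by (simp add: tril_map_def)

text \<open>Tensor equalities are stated against scalar-valued forms; composing with all linear forms,
  which separate points, transfers them to bilinear and trilinear maps into the coalgebra.\<close>

lemma tensor2_eq_bil_map:
  assumes "tensor2_eq sc xs ys" "bil_map sc f"
  shows "(\<Sum>(x, y)\<leftarrow>xs. f x y) = (\<Sum>(x, y)\<leftarrow>ys. f x y)"
proof (rule vs.eq_if_lin_forms_agree)
  fix \<phi> assume \<phi>: "lin_form sc \<phi>"
  have "bil_form sc (\<lambda>x y. \<phi> (f x y))"
    using assms(2) \<phi> unfolding bil_form_def bil_map_def by (auto intro: lin_form_comp)
  then have "(\<Sum>(x, y)\<leftarrow>xs. \<phi> (f x y)) = (\<Sum>(x, y)\<leftarrow>ys. \<phi> (f x y))"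
    using assms(1) unfolding tensor2_eq_def by blast
  then show "\<phi> (\<Sum>(x, y)\<leftarrow>xs. f x y) = \<phi> (\<Sum>(x, y)\<leftarrow>ys. f x y)"
    by (simp add: lin_form_sum_list[OF \<phi>] o_def case_prod_beta')
qed

lemma tensor3_eq_tril_map:
  assumes "tensor3_eq sc xs ys" "tril_map sc f"
  shows "(\<Sum>(x, y, z)\<leftarrow>xs. f x y z) = (\<Sum>(x, y, z)\<leftarrow>ys. f x y z)"
proof (rule vs.eq_if_lin_forms_agree)
  fix \<phi> assume \<phi>: "lin_form sc \<phi>"
  have "tril_form sc (\<lambda>x y z. \<phi> (f x y z))"
    using assms(2) \<phi> unfolding tril_form_def tril_map_def by (auto intro: lin_form_comp)
  then have "(\<Sum>(x, y, z)\<leftarrow>xs. \<phi> (f x y z)) = (\<Sum>(x, y, z)\<leftarrow>ys. \<phi> (f x y z))"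
    using assms(1) unfolding tensor3_eq_def by blast
  then show "\<phi> (\<Sum>(x, y, z)\<leftarrow>xs. f x y z) = \<phi> (\<Sum>(x, y, z)\<leftarrow>ys. f x y z)"
    by (simp add: lin_form_sum_list[OF \<phi>] o_def case_prod_beta')
qed

lemma lin_sw: "lin h \<Longrightarrow> h (sw D c f) = sw D c (\<lambda>x y. h (f x y))"
  unfolding sw_def by (simp add: lin_sum_list o_def case_prod_beta')

lemma sw_scale: "sw D c (\<lambda>x y. sc a (f x y)) = sc a (sw D c f)"
  by (simp add: lin_sw lin_id lin_scale_fun)

lemma sw_scale_left: "sw D c (\<lambda>x y. sc (g x y) v) = sc (sw D c g) v"
proof -
  have "(\<Sum>p\<leftarrow>xs. sc (h p) v) = sc (\<Sum>p\<leftarrow>xs. h p) v" for xs :: "'b list" and h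
    by (induction xs) (simp_all add: vs.scale_left_distrib)
  then show ?thesis unfolding sw_def by (simp add: case_prod_beta')
qed

lemma sw_comult_add: "bil_map sc f \<Longrightarrow> sw D (x + y) f = sw D x f + sw D y f"
  using tensor2_eq_bil_map[of "D (x + y)" "D x @ D y" f] coalgebra
  unfolding coalgebra_def sw_def by auto

lemma sw_comult_scale: 
  assumes f: "bil_map sc f"
  shows "sw D (sc a x) f = sc a (sw D x f)"
proof -
  have "sw D (sc a x) f = (\<Sum>(u, v)\<leftarrow>D x. f (sc a u) v)"
    using tensor2_eq_bil_map[OF _ f, of "D (sc a x)" "map (\<lambda>(u, v). (sc a u, v)) (D x)"] coalgebra
    unfolding coalgebra_def sw_def by (simp add: o_def case_prod_beta')
  also have "\<dots> = sw D x (\<lambda>u v. sc a (f u v))"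
  proof -
    have "f (sc a u) v = sc a (f u v)" for u v
      using f lin_scale[of "\<lambda>x. f x v"] unfolding bil_map_def by blast
    then show ?thesis by (simp add: sw_def)
  qed
  finally show ?thesis by (simp add: sw_scale)
qed

lemma lin_sw_comult [lin_intros]: "bil_map sc f \<Longrightarrow> lin g \<Longrightarrow> lin (\<lambda>x. sw D (g x) f)"
  unfolding lin_map_def by (simp add: sw_comult_add sw_comult_scale)

lemma lin_sw_fun [lin_intros]: "(\<And>a b. lin (f a b)) \<Longrightarrow> lin (\<lambda>x. sw D c (\<lambda>a b. f a b x))"
  unfolding lin_map_def by (simp add: lin_add lin_scale sw_add sw_scale)

lemma coassoc:
  assumes "tril_map sc f"
  shows "sw D c (\<lambda>c12 c3. sw D c12 (\<lambda>c1 c2. f c1 c2 c3))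
       = sw D c (\<lambda>c1 c23. sw D c23 (\<lambda>c2 c3. f c1 c2 c3))"
proof -
  have "(\<Sum>(x, y, z)\<leftarrow>delta3L D c. f x y z) = (\<Sum>(x, y, z)\<leftarrow>delta3R D c. f x y z)"
    using tensor3_eq_tril_map assms coalgebra unfolding coalgebra_def by blast
  then show ?thesis
    unfolding delta3L_def delta3R_def sw_def
    by (simp add: map_concat sum_list_concat o_def case_prod_beta')
qed

lemma counit_left: "sw D c (\<lambda>x y. sc (eps x) y) = c"
  using coalgebra by (simp add: coalgebra_def sw_def)

lemma counit_right: "sw D c (\<lambda>x y. sc (eps y) x) = c"
  using coalgebra by (simp add: coalgebra_def sw_def)

lemma counit_left_lin: "lin g \<Longrightarrow> sw D c (\<lambda>x y. sc (eps x) (g y)) = g c"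
  using lin_sw[of g c "\<lambda>x y. sc (eps x) y"] by (simp add: lin_scale counit_left)

lemma counit_right_lin: "lin g \<Longrightarrow> sw D c (\<lambda>x y. sc (eps y) (g x)) = g c"
  using lin_sw[of g c "\<lambda>x y. sc (eps y) x"] by (simp add: lin_scale counit_right)

lemma lin_form_eps: "lin_form sc eps"
  using coalgebra by (simp add: coalgebra_def)

lemma eps_add: "eps (x + y) = eps x + eps y"
  using lin_form_eps by (simp add: lin_form_def)

lemma eps_scale: "eps (sc a x) = a * eps x"
  using lin_form_eps by (simp add: lin_form_def)

lemma lin_scale_eps [lin_intros]: "lin g \<Longrightarrow> lin (\<lambda>x. sc (eps (g x)) w)"
  by (simp add: lin_map_def eps_add eps_scale vs.scale_left_distrib vs.scale_scale)

lemma eps_sw: "eps (sw D c g) = sw D c (\<lambda>x y. eps (g x y))"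
  unfolding sw_def by (simp add: lin_form_sum_list[OF lin_form_eps] o_def case_prod_beta')

lemma sw_const_mult: "sw D c (\<lambda>x y. k * g x y) = (k :: 'f) * sw D c g"
  unfolding sw_def by (simp add: sum_list_const_mult case_prod_beta')

lemma sw_mult_const: "sw D c (\<lambda>x y. g x y * k) = sw D c g * (k :: 'f)"
  unfolding sw_def by (simp add: sum_list_mult_const case_prod_beta')

lemma sw_eps_mult: "sw D c (\<lambda>x y. eps x * eps y) = eps c"
  using arg_cong[OF counit_left, of eps c] by (simp add: eps_sw eps_scale)

lemma exists_eps_eq_one: "\<exists>e. eps e = 1"
proof (rule ccontr)
  assume none: "\<nexists>e. eps e = 1"
  have eps_zero: "eps x = 0" for x
  proof (rule ccontr)
    assume "eps x \<noteq> 0"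
    then have "eps (sc (inverse (eps x)) x) = 1" by (simp add: eps_scale)
    with none show False by blast
  qed
  obtain c :: 'v where "c \<noteq> 0" using coalgebra unfolding coalgebra_def by auto
  moreover have "c = 0"
    using counit_left[of c] by (simp add: sw_def eps_zero case_prod_beta')
  ultimately show False by simp
qed

end

locale hopf_heap_space = coalgebra_space sc D eps
  for sc :: "'f::field \<Rightarrow> 'v::ab_group_add \<Rightarrow> 'v" and D eps +
  fixes br :: "'v \<Rightarrow> 'v \<Rightarrow> 'v \<Rightarrow> 'v"
  assumes hopf_heap: "hopf_heap sc D eps br"
begin

lemma br_assoc: "br (br a b c) d e = br a b (br c d e)"
  using hopf_heap by (simp add: hopf_heap_def)

lemma sw_br_collapse_left: "sw D c (\<lambda>x y. br x y a) = sc (eps c) a"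
  using hopf_heap by (simp add: hopf_heap_def sw_def)

lemma sw_br_collapse_right: "sw D c (\<lambda>x y. br a x y) = sc (eps c) a"
  using hopf_heap by (simp add: hopf_heap_def sw_def)

lemma eps_br: "eps (br a b c) = eps a * eps b * eps c"
  using hopf_heap by (simp add: hopf_heap_def)

lemma lin_br1 [lin_intros]: "lin g \<Longrightarrow> lin (\<lambda>x. br (g x) b c)"
  and lin_br2 [lin_intros]: "lin g \<Longrightarrow> lin (\<lambda>x. br a (g x) c)"
  and lin_br3 [lin_intros]: "lin g \<Longrightarrow> lin (\<lambda>x. br a b (g x))"
  using hopf_heap unfolding hopf_heap_def tril_map_def lin_map_def by simp_all

lemma sw_comult_br:
  assumes "bil_map sc f"
  shows "sw D (br a b c) f
       = sw D a (\<lambda>a1 a2. sw D b (\<lambda>b1 b2. sw D c (\<lambda>c1 c2. f (br a1 b2 c1) (br a2 b1 c2))))"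
proof -
  have "tensor2_eq sc (D (br a b c))
     (concat (map (\<lambda>(a1, a2). concat (map (\<lambda>(b1, b2). map (\<lambda>(c1, c2).
        (br a1 b2 c1, br a2 b1 c2)) (D c)) (D b))) (D a)))"
    using hopf_heap by (simp add: hopf_heap_def)
  from tensor2_eq_bil_map[OF this assms] show ?thesis
    unfolding sw_def by (simp add: map_concat sum_list_concat o_def case_prod_beta')
qed

lemma br_sw1: "br (sw D c f) b d = sw D c (\<lambda>x y. br (f x y) b d)"
  and br_sw2: "br a (sw D c f) d = sw D c (\<lambda>x y. br a (f x y) d)"
  and br_sw3: "br a b (sw D c f) = sw D c (\<lambda>x y. br a b (f x y))"
  by (rule lin_sw, intro lin_intros)+

lemmas br_sw = br_sw1 br_sw2 br_sw3

lemma br_scale1: "br (sc a x) b d = sc a (br x b d)"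
  and br_scale2: "br b (sc a x) d = sc a (br b x d)"
  and br_scale3: "br b d (sc a x) = sc a (br b d x)"
  by (rule lin_scale, intro lin_intros)+

lemmas br_scale = br_scale1 br_scale2 br_scale3

lemma sw_br_comult_collapse_left:
  "sw D x (\<lambda>x1 x2. sw D y (\<lambda>y1 y2. sw D q (\<lambda>q1 q2. br (br x1 y2 q1) (br x2 y1 q2) w)))
 = sc (eps x) (sc (eps y) (sc (eps q) w))"
proof -
  have "sw D (br x y q) (\<lambda>u1 u2. br u1 u2 w)
      = sw D x (\<lambda>x1 x2. sw D y (\<lambda>y1 y2. sw D q (\<lambda>q1 q2. br (br x1 y2 q1) (br x2 y1 q2) w)))"
    by (rule sw_comult_br) (intro lin_intros)
  then show ?thesis by (simp add: sw_br_collapse_left eps_br vs.scale_scale mult.assoc)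
qed

lemma sw_br_comult_collapse_right:
  "sw D x (\<lambda>x1 x2. sw D y (\<lambda>y1 y2. sw D q (\<lambda>q1 q2. br p (br x1 y2 q1) (br x2 y1 q2))))
 = sc (eps x) (sc (eps y) (sc (eps q) p))"
proof -
  have "sw D (br x y q) (\<lambda>u1 u2. br p u1 u2)
      = sw D x (\<lambda>x1 x2. sw D y (\<lambda>y1 y2. sw D q (\<lambda>q1 q2. br p (br x1 y2 q1) (br x2 y1 q2))))"
    by (rule sw_comult_br) (intro lin_intros)
  then show ?thesis by (simp add: sw_br_collapse_right eps_br vs.scale_scale mult.assoc)
qed

text \<open>Both sides are evaluations of \<open>\<Sum> [t, x\<^sub>0, [[x\<^sub>1, y\<^sub>2, q\<^sub>1], [x\<^sub>2, y\<^sub>1, q\<^sub>2], w]]\<close>: the inner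
  sum is \<open>\<Delta>[x\<^sub>1\<^sub>2, y, q]\<close> fed into a collapse, which gives the right-hand side, while
  reassociating and collapsing \<open>[t, x\<^sub>0, x\<^sub>1]\<close> gives the left-hand side.\<close>

lemma sw_br_nested_collapse:
  "sw D y (\<lambda>y1 y2. sw D q (\<lambda>q1 q2. br t y2 (br q1 (br x y1 q2) w)))
 = sc (eps y) (sc (eps q) (br t x w))"
proof -
  let ?Z = "sw D x (\<lambda>x0 x'. br t x0 (sw D x' (\<lambda>x1 x2. sw D y (\<lambda>y1 y2. sw D q (\<lambda>q1 q2.
              br (br x1 y2 q1) (br x2 y1 q2) w)))))"
  have "?Z = sw D x (\<lambda>x0 x'. sc (eps x') (br t x0 (sc (eps y) (sc (eps q) w))))"
    by (simp add: sw_br_comult_collapse_left br_scale)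
  also have "\<dots> = br t x (sc (eps y) (sc (eps q) w))"
    by (rule counit_right_lin) (intro lin_intros)
  also have "\<dots> = sc (eps y) (sc (eps q) (br t x w))"
    by (simp add: br_scale)
  finally have Z: "?Z = sc (eps y) (sc (eps q) (br t x w))" .
  have "?Z = sw D x (\<lambda>x0 x'. sw D x' (\<lambda>x1 x2. br t x0 (sw D y (\<lambda>y1 y2. sw D q (\<lambda>q1 q2.
               br (br x1 y2 q1) (br x2 y1 q2) w)))))"
    by (simp add: br_sw)
  also have "\<dots> = sw D x (\<lambda>x' x2. sw D x' (\<lambda>x0 x1. br t x0 (sw D y (\<lambda>y1 y2. sw D q (\<lambda>q1 q2.
               br (br x1 y2 q1) (br x2 y1 q2) w)))))"
    by (rule coassoc[symmetric]) (intro lin_intros)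
  also have "\<dots> = sw D x (\<lambda>x' x2. sw D x' (\<lambda>x0 x1. sw D y (\<lambda>y1 y2. sw D q (\<lambda>q1 q2.
               br (br (br t x0 x1) y2 q1) (br x2 y1 q2) w))))"
    by (simp add: br_sw br_assoc)
  also have "\<dots> = sw D x (\<lambda>x' x2. sw D y (\<lambda>y1 y2. sw D q (\<lambda>q1 q2. sw D x' (\<lambda>x0 x1.
               br (br (br t x0 x1) y2 q1) (br x2 y1 q2) w))))"
    by (rule sw_cong) (rule sw_push_inside3)
  also have "\<dots> = sw D x (\<lambda>x' x2. sc (eps x') (sw D y (\<lambda>y1 y2. sw D q (\<lambda>q1 q2.
               br (br t y2 q1) (br x2 y1 q2) w))))"
    by (simp add: br_sw[symmetric] sw_br_collapse_right br_scale sw_scale)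
  also have "\<dots> = sw D y (\<lambda>y1 y2. sw D q (\<lambda>q1 q2. br (br t y2 q1) (br x y1 q2) w))"
    by (rule counit_left_lin) (intro lin_intros)
  finally show ?thesis using Z by (simp add: br_assoc)
qed

abbreviation theta :: "'v \<Rightarrow> 'v \<Rightarrow> 'v" where
  "theta e \<equiv> grunspan_formula D br e"

lemma grunspan_formula_sw:
  "theta e c = sw D c (\<lambda>c12 c3. sw D c12 (\<lambda>c1 c2. sw D e (\<lambda>e1 e2. br c1 (br e1 c3 c2) e2)))"
  unfolding grunspan_formula_def delta3L_def sw_def
  by (simp add: map_concat sum_list_concat o_def case_prod_beta')

lemma lin_theta [lin_intros]: "lin g \<Longrightarrow> lin (\<lambda>x. theta e (g x))"
  unfolding grunspan_formula_sw by (intro lin_intros)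

lemma sw_br_theta_collapse:
  assumes e: "eps e = 1"
  shows "sw D y (\<lambda>y1 y2. br w y2 (theta e y1)) = sc (eps y) w"
proof -
  have "sw D y (\<lambda>y1 y2. br w y2 (theta e y1))
      = sw D y (\<lambda>y1 y2. sw D y1 (\<lambda>y12 y3. br w y2 (sw D y12 (\<lambda>c1 c2.
          sw D e (\<lambda>e1 e2. br c1 (br e1 y3 c2) e2)))))"
    unfolding grunspan_formula_sw by (simp add: br_sw)
  also have "\<dots> = sw D y (\<lambda>y12 y'. sw D y' (\<lambda>y3 y2. br w y2 (sw D y12 (\<lambda>c1 c2.
          sw D e (\<lambda>e1 e2. br c1 (br e1 y3 c2) e2)))))"
    by (rule coassoc) (intro lin_intros)
  also have "\<dots> = sw D y (\<lambda>y12 y'. sw D e (\<lambda>e1 e2. sw D y' (\<lambda>y3 y2. sw D y12 (\<lambda>c1 c2.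
          br w y2 (br c1 (br e1 y3 c2) e2)))))"
    by (simp add: br_sw) (rule sw_cong, rule sw_pull_outside3)
  also have "\<dots> = sw D y (\<lambda>y12 y'. sw D e (\<lambda>e1 e2. sc (eps y') (sc (eps y12) (br w e1 e2))))"
    by (simp add: sw_br_nested_collapse)
  also have "\<dots> = sw D y (\<lambda>y12 y'. sc (eps y12) (sc (eps y') w))"
    by (simp add: sw_scale sw_br_collapse_right e vs.scale_left_commute mult.commute)
  also have "\<dots> = sc (eps y) w"
    by (rule counit_left_lin) (intro lin_intros)
  finally show ?thesis .
qed

text \<open>Summed over the threefold coproducts of \<open>x, y, q\<close>, this term evaluates to both sides of
  the Grunspan identity.\<close>

definition grunspan_term :: "'v \<Rightarrow> 'v \<Rightarrow> 'v \<Rightarrow> 'v \<Rightarrow> 'v \<Rightarrow> 'v \<Rightarrow> 'v \<Rightarrow> 'v \<Rightarrow> 'v \<Rightarrow> 'v \<Rightarrow> 'v \<Rightarrow> 'v \<Rightarrow> 'v"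
  where
  "grunspan_term e p z x1 x2 x3 y1 y2 y3 q1 q2 q3
     = br p (br x1 y3 q1) (br (br (br x2 y2 q2) q3 (theta e y1)) x3 z)"

lemma sw_grunspan_term_left:
  assumes e: "eps e = 1"
  shows "sw D x (\<lambda>x1 x'. sw D x' (\<lambda>x2 x3. sw D y (\<lambda>y' y3. sw D y' (\<lambda>y1 y2.
           sw D q (\<lambda>q1 q'. sw D q' (\<lambda>q2 q3. grunspan_term e p z x1 x2 x3 y1 y2 y3 q1 q2 q3))))))
       = br p (br x y q) z"
proof -
  have q23: "sw D q' (\<lambda>q2 q3. grunspan_term e p z x1 x2 x3 y1 y2 y3 q1 q2 q3)
      = sc (eps q') (br p (br x1 y3 q1) (br (br x2 y2 (theta e y1)) x3 z))"
    for q' x1 x2 x3 y1 y2 y3 q1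
    unfolding grunspan_term_def
    by (simp add: br_assoc br_sw[symmetric] sw_br_collapse_left br_scale)
  have q: "sw D q (\<lambda>q1 q'. sc (eps q') (br p (br x1 y3 q1) (br (br x2 y2 (theta e y1)) x3 z)))
      = br p (br x1 y3 q) (br (br x2 y2 (theta e y1)) x3 z)" for x1 x2 x3 y1 y2 y3
    by (rule counit_right_lin) (intro lin_intros)
  have y12: "sw D y' (\<lambda>y1 y2. br p m (br (br x2 y2 (theta e y1)) x3 z))
      = sc (eps y') (br p m (br x2 x3 z))" for y' m x2 x3
    by (simp add: br_sw[symmetric] sw_br_theta_collapse[OF e] br_scale)
  have y: "sw D y (\<lambda>y' y3. sc (eps y') (br p (br x1 y3 q) (br x2 x3 z)))
      = br p (br x1 y q) (br x2 x3 z)" for x1 x2 x3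
    by (rule counit_left_lin) (intro lin_intros)
  have x23: "sw D x' (\<lambda>x2 x3. br p m (br x2 x3 z)) = sc (eps x') (br p m z)" for x' m
    by (simp add: br_sw[symmetric] sw_br_collapse_left br_scale)
  have x: "sw D x (\<lambda>x1 x'. sc (eps x') (br p (br x1 y q) z)) = br p (br x y q) z"
    by (rule counit_right_lin) (intro lin_intros)
  show ?thesis by (simp add: q23 q y12 y x23 x)
qed

lemma sw_grunspan_term_right:
  "sw D x (\<lambda>x' x3. sw D y (\<lambda>y1 y'. sw D q (\<lambda>q' q3.
     sw D x' (\<lambda>x1 x2. sw D y' (\<lambda>y2 y3. sw D q' (\<lambda>q1 q2.
       grunspan_term e p z x1 x2 x3 y1 y2 y3 q1 q2 q3))))))
 = br (br p q (theta e y)) x z"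
proof -
  have inner: "sw D x' (\<lambda>x1 x2. sw D y' (\<lambda>y2 y3. sw D q' (\<lambda>q1 q2.
        grunspan_term e p z x1 x2 x3 y1 y2 y3 q1 q2 q3)))
      = sc (eps x') (sc (eps y') (sc (eps q') (br (br p q3 (theta e y1)) x3 z)))"
    for x' y' q' x3 y1 q3
  proof -
    have "sw D x' (\<lambda>x1 x2. sw D y' (\<lambda>y2 y3. sw D q' (\<lambda>q1 q2.
        grunspan_term e p z x1 x2 x3 y1 y2 y3 q1 q2 q3)))
      = br (br (sw D x' (\<lambda>x1 x2. sw D y' (\<lambda>y2 y3. sw D q' (\<lambda>q1 q2.
          br p (br x1 y3 q1) (br x2 y2 q2))))) q3 (theta e y1)) x3 z"
      unfolding grunspan_term_def by (simp add: br_sw br_assoc)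
    then show ?thesis by (simp add: sw_br_comult_collapse_right br_scale)
  qed
  have q: "sw D q (\<lambda>q' q3. sc (eps q') (br (br p q3 (theta e y1)) x3 z))
      = br (br p q (theta e y1)) x3 z" for y1 x3
    by (rule counit_left_lin) (intro lin_intros)
  have y: "sw D y (\<lambda>y1 y'. sc (eps y') (br (br p q (theta e y1)) x3 z))
      = br (br p q (theta e y)) x3 z" for x3
    by (rule counit_right_lin) (intro lin_intros)
  have x: "sw D x (\<lambda>x' x3. sc (eps x') (br (br p q (theta e y)) x3 z))
      = br (br p q (theta e y)) x z"
    by (rule counit_left_lin) (intro lin_intros)
  show ?thesis by (simp only: inner sw_scale q y x)
qed

lemma sw_grunspan_term_rebracket:
  "sw D x (\<lambda>x1 x'. sw D x' (\<lambda>x2 x3. sw D y (\<lambda>y' y3. sw D y' (\<lambda>y1 y2.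
     sw D q (\<lambda>q1 q'. sw D q' (\<lambda>q2 q3. grunspan_term e p z x1 x2 x3 y1 y2 y3 q1 q2 q3))))))
 = sw D x (\<lambda>x' x3. sw D y (\<lambda>y1 y'. sw D q (\<lambda>q' q3.
     sw D x' (\<lambda>x1 x2. sw D y' (\<lambda>y2 y3. sw D q' (\<lambda>q1 q2.
       grunspan_term e p z x1 x2 x3 y1 y2 y3 q1 q2 q3))))))"
  (is "?lhs = ?rhs")
proof -
  let ?G = "grunspan_term e p z"
  have "?lhs = sw D x (\<lambda>x1 x'. sw D x' (\<lambda>x2 x3. sw D y (\<lambda>y' y3. sw D y' (\<lambda>y1 y2.
     sw D q (\<lambda>q' q3. sw D q' (\<lambda>q1 q2. ?G x1 x2 x3 y1 y2 y3 q1 q2 q3))))))"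
    by (rule sw_cong, rule sw_cong, rule sw_cong, rule sw_cong, rule coassoc[symmetric])
      (unfold grunspan_term_def, intro lin_intros)
  also have "\<dots> = sw D x (\<lambda>x1 x'. sw D x' (\<lambda>x2 x3. sw D y (\<lambda>y1 y'. sw D y' (\<lambda>y2 y3.
     sw D q (\<lambda>q' q3. sw D q' (\<lambda>q1 q2. ?G x1 x2 x3 y1 y2 y3 q1 q2 q3))))))"
    by (rule sw_cong, rule sw_cong, rule coassoc) (unfold grunspan_term_def, intro lin_intros)
  also have "\<dots> = sw D x (\<lambda>x' x3. sw D x' (\<lambda>x1 x2. sw D y (\<lambda>y1 y'. sw D y' (\<lambda>y2 y3.
     sw D q (\<lambda>q' q3. sw D q' (\<lambda>q1 q2. ?G x1 x2 x3 y1 y2 y3 q1 q2 q3))))))"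
    by (rule coassoc[symmetric]) (unfold grunspan_term_def, intro lin_intros)
  also have "\<dots> = ?rhs"
    by (intro sw_cong, subst sw_swap, intro sw_cong, rule sw_pull_outside3)
  finally show ?thesis .
qed

theorem grunspan_identity:
  assumes "eps e = 1"
  shows "br p (br x y q) z = br (br p q (theta e y)) x z"
  using sw_grunspan_term_left[OF assms] sw_grunspan_term_rebracket sw_grunspan_term_right
  by metis

context
  fixes f :: "'v \<Rightarrow> 'v \<Rightarrow> 'v"
  assumes f: "bil_map sc f"
begin

lemma lin_f1 [lin_intros]: "lin g \<Longrightarrow> lin (\<lambda>x. f (g x) y)"
  and lin_f2 [lin_intros]: "lin g \<Longrightarrow> lin (\<lambda>x. f y (g x))"
  using f unfolding bil_map_def lin_map_def by auto

lemma f_sw1: "f (sw D c g) z = sw D c (\<lambda>x y. f (g x y) z)"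
  and f_sw2: "f z (sw D c g) = sw D c (\<lambda>x y. f z (g x y))"
  by (rule lin_sw, intro lin_intros)+

lemma f_scale1: "f (sc a x) z = sc a (f x z)"
  and f_scale2: "f z (sc a x) = sc a (f z x)"
  by (rule lin_scale, intro lin_intros)+

lemma sw_comult_sw: "sw D (sw D c g) f = sw D c (\<lambda>x y. sw D (g x y) f)"
  by (rule lin_sw) (intro lin_intros f)

lemma sw_f_br_collapse:
  assumes e: "eps e = 1"
  shows "sw D e (\<lambda>e1 e2. sw D e1 (\<lambda>g1 g2. sw D e2 (\<lambda>b1 b2. f (br X g2 b1) (br Y g1 b2)))) = f X Y"
proof -
  have "sw D e (\<lambda>e1 e2. sw D e1 (\<lambda>g1 g2. sw D e2 (\<lambda>b1 b2. f (br X g2 b1) (br Y g1 b2))))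
      = sw D e (\<lambda>g1 e'. sw D e' (\<lambda>g2 e2. sw D e2 (\<lambda>b1 b2. f (br X g2 b1) (br Y g1 b2))))"
    by (rule coassoc) (intro lin_intros)
  also have "\<dots> = sw D e (\<lambda>g1 e'. sw D e' (\<lambda>m b2. sw D m (\<lambda>g2 b1. f (br X g2 b1) (br Y g1 b2))))"
    by (rule sw_cong, rule coassoc[symmetric]) (intro lin_intros)
  also have "\<dots> = sw D e (\<lambda>g1 e'. sw D e' (\<lambda>m b2. sc (eps m) (f X (br Y g1 b2))))"
    by (simp add: f_sw1[symmetric] sw_br_collapse_right f_scale1)
  also have "\<dots> = sw D e (\<lambda>g1 e'. f X (br Y g1 e'))"
    by (rule sw_cong, rule counit_left_lin) (intro lin_intros)
  also have "\<dots> = f X Y"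
    by (simp add: f_sw2[symmetric] sw_br_collapse_right e)
  finally show ?thesis .
qed

lemma sw_f_theta_collapse:
  "sw D c (\<lambda>c12 c3. sw D c3 (\<lambda>h1 h2. sw D c12 (\<lambda>c1 c2. sw D c1 (\<lambda>a1 a2. sw D c2 (\<lambda>k1 k2.
     f (br a1 k2 (theta e h1)) (br a2 k1 (theta e h2)))))))
 = sw D c (\<lambda>x y. f (theta e x) (theta e y))"
proof -
  have inner: "sw D c12 (\<lambda>c1 c2. sw D c1 (\<lambda>a1 a2. sw D c2 (\<lambda>k1 k2. f (br a1 k2 u) (br a2 k1 v))))
    = sc (eps c12) (f u v)" for c12 u v
  proof -
    have "sw D c12 (\<lambda>c1 c2. sw D c1 (\<lambda>a1 a2. sw D c2 (\<lambda>k1 k2. f (br a1 k2 u) (br a2 k1 v))))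
      = sw D c12 (\<lambda>a1 c'. sw D c' (\<lambda>a2 c2. sw D c2 (\<lambda>k1 k2. f (br a1 k2 u) (br a2 k1 v))))"
      by (rule coassoc) (intro lin_intros)
    also have "\<dots> = sw D c12 (\<lambda>a1 c'. sw D c' (\<lambda>m k2. sw D m (\<lambda>a2 k1. f (br a1 k2 u) (br a2 k1 v))))"
      by (rule sw_cong, rule coassoc[symmetric]) (intro lin_intros)
    also have "\<dots> = sw D c12 (\<lambda>a1 c'. sw D c' (\<lambda>m k2. sc (eps m) (f (br a1 k2 u) v)))"
      by (simp add: f_sw2[symmetric] sw_br_collapse_left f_scale2)
    also have "\<dots> = sw D c12 (\<lambda>a1 c'. f (br a1 c' u) v)"
      by (rule sw_cong, rule counit_left_lin) (intro lin_intros)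
    also have "\<dots> = sc (eps c12) (f u v)"
      by (simp add: f_sw1[symmetric] sw_br_collapse_left f_scale1)
    finally show ?thesis .
  qed
  have "sw D c (\<lambda>c12 c3. sw D c3 (\<lambda>h1 h2. sw D c12 (\<lambda>c1 c2. sw D c1 (\<lambda>a1 a2. sw D c2 (\<lambda>k1 k2.
       f (br a1 k2 (theta e h1)) (br a2 k1 (theta e h2)))))))
    = sw D c (\<lambda>c12 c3. sc (eps c12) (sw D c3 (\<lambda>h1 h2. f (theta e h1) (theta e h2))))"
    by (simp add: inner sw_scale)
  also have "\<dots> = sw D c (\<lambda>x y. f (theta e x) (theta e y))"
    by (rule counit_left_lin) (intro lin_intros)
  finally show ?thesis .
qed

text \<open>Expanding \<open>\<Delta>\<theta>(c)\<close> through the comultiplicativity of the bracket, the Grunspan identity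
  moves \<open>\<theta>\<close> out of the inner brackets, after which the factors of \<open>e\<close> collapse.\<close>

lemma sw_comult_theta:
  assumes e: "eps e = 1"
  shows "sw D (theta e c) f = sw D c (\<lambda>x y. f (theta e x) (theta e y))"
proof -
  have "sw D (theta e c) f = sw D c (\<lambda>c12 c3. sw D c12 (\<lambda>c1 c2. sw D e (\<lambda>e1 e2.
     sw D c1 (\<lambda>a1 a2. sw D (br e1 c3 c2) (\<lambda>m1 m2. sw D e2 (\<lambda>b1 b2.
       f (br a1 m2 b1) (br a2 m1 b2)))))))"
    unfolding grunspan_formula_sw
    by (simp only: sw_comult_sw sw_comult_br[OF f])
  also have "\<dots> = sw D c (\<lambda>c12 c3. sw D c12 (\<lambda>c1 c2. sw D e (\<lambda>e1 e2.
     sw D e1 (\<lambda>g1 g2. sw D c3 (\<lambda>h1 h2. sw D c2 (\<lambda>k1 k2.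
     sw D c1 (\<lambda>a1 a2. sw D e2 (\<lambda>b1 b2. f (br a1 (br g2 h1 k2) b1) (br a2 (br g1 h2 k1) b2)))))))))"
    by (intro sw_cong, subst sw_swap, rule sw_comult_br) (intro lin_intros)
  also have "\<dots> = sw D c (\<lambda>c12 c3. sw D c12 (\<lambda>c1 c2. sw D e (\<lambda>e1 e2.
     sw D e1 (\<lambda>g1 g2. sw D c3 (\<lambda>h1 h2. sw D c2 (\<lambda>k1 k2.
     sw D c1 (\<lambda>a1 a2. sw D e2 (\<lambda>b1 b2.
       f (br (br a1 k2 (theta e h1)) g2 b1) (br (br a2 k1 (theta e h2)) g1 b2)))))))))"
    by (simp only: grunspan_identity[OF e])
  also have "\<dots> = sw D c (\<lambda>c12 c3. sw D c12 (\<lambda>c1 c2. sw D c3 (\<lambda>h1 h2. sw D c2 (\<lambda>k1 k2.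
     sw D c1 (\<lambda>a1 a2. sw D e (\<lambda>e1 e2. sw D e1 (\<lambda>g1 g2. sw D e2 (\<lambda>b1 b2.
       f (br (br a1 k2 (theta e h1)) g2 b1) (br (br a2 k1 (theta e h2)) g1 b2)))))))))"
    by (intro sw_cong, subst sw_push_inside4[symmetric], rule sw_push_block_inside3)
  also have "\<dots> = sw D c (\<lambda>c12 c3. sw D c12 (\<lambda>c1 c2. sw D c3 (\<lambda>h1 h2. sw D c2 (\<lambda>k1 k2.
     sw D c1 (\<lambda>a1 a2. f (br a1 k2 (theta e h1)) (br a2 k1 (theta e h2)))))))"
    by (simp only: sw_f_br_collapse[OF e])
  also have "\<dots> = sw D c (\<lambda>c12 c3. sw D c3 (\<lambda>h1 h2. sw D c12 (\<lambda>c1 c2.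
     sw D c1 (\<lambda>a1 a2. sw D c2 (\<lambda>k1 k2. f (br a1 k2 (theta e h1)) (br a2 k1 (theta e h2)))))))"
    by (intro sw_cong, subst sw_swap, intro sw_cong, rule sw_swap)
  also have "\<dots> = sw D c (\<lambda>x y. f (theta e x) (theta e y))"
    by (rule sw_f_theta_collapse)
  finally show ?thesis .
qed

end

lemma eps_theta:
  assumes e: "eps e = 1"
  shows "eps (theta e c) = eps c"
proof -
  have "eps (theta e c) = sw D c (\<lambda>c12 c3. sw D c12 (\<lambda>c1 c2. sw D e (\<lambda>e1 e2.
      (eps c1 * eps c2 * eps c3) * (eps e1 * eps e2))))"
    unfolding grunspan_formula_sw by (simp add: eps_sw eps_br ac_simps)
  also have "\<dots> = sw D c (\<lambda>c12 c3. sw D c12 (\<lambda>c1 c2. eps c1 * eps c2 * eps c3))"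
    by (simp add: sw_const_mult sw_eps_mult e)
  also have "\<dots> = sw D c (\<lambda>c12 c3. eps c12 * eps c3)"
    by (simp add: sw_mult_const sw_eps_mult)
  also have "\<dots> = eps c"
    by (rule sw_eps_mult)
  finally show ?thesis .
qed

text \<open>A bilinear form \<open>B\<close> is tested through the bilinear map \<open>B x y \<cdot> v\<^sub>0\<close> for a fixed
  \<open>v\<^sub>0 \<noteq> 0\<close>, to which the comultiplicativity of \<open>\<theta>\<close> applies.\<close>

lemma tensor2_eq_comult_theta:
  assumes e: "eps e = 1"
  shows "tensor2_eq sc (D (theta e c)) (map (\<lambda>(x, y). (theta e x, theta e y)) (D c))"
  unfolding tensor2_eq_def
proof (intro allI impI)
  fix B assume B: "bil_form sc B"
  obtain v0 :: 'v where v0: "v0 \<noteq> 0" using coalgebra unfolding coalgebra_def by auto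
  have "bil_map sc (\<lambda>x y. sc (B x y) v0)"
    using B unfolding bil_map_def bil_form_def lin_form_def lin_map_def
    by (auto simp: vs.scale_left_distrib vs.scale_scale)
  from sw_comult_theta[OF this e, of c]
  have "sc (sw D (theta e c) B) v0 = sc (sw D c (\<lambda>x y. B (theta e x) (theta e y))) v0"
    by (simp only: sw_scale_left)
  with v0 have "sw D (theta e c) B = sw D c (\<lambda>x y. B (theta e x) (theta e y))"
    by simp
  then show "(\<Sum>(x, y)\<leftarrow>D (theta e c). B x y)
      = (\<Sum>(x, y)\<leftarrow>map (\<lambda>(x, y). (theta e x, theta e y)) (D c). B x y)"
    unfolding sw_def by (simp add: o_def case_prod_beta')
qed

lemma grunspan_map_theta:
  assumes "eps e = 1"
  shows "grunspan_map sc D eps br (theta e)"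
  unfolding grunspan_map_def coalg_map_def
  using lin_theta[OF lin_id] tensor2_eq_comult_theta[OF assms] eps_theta[OF assms]
    grunspan_identity[OF assms]
  by simp

end

theorem mainTheorem14:
  fixes sc :: "'f::field \<Rightarrow> 'v::ab_group_add \<Rightarrow> 'v"
    and D :: "'v \<Rightarrow> ('v \<times> 'v) list" and eps :: "'v \<Rightarrow> 'f"
    and br :: "'v \<Rightarrow> 'v \<Rightarrow> 'v \<Rightarrow> 'v"
  assumes "hopf_heap sc D eps br"
  shows "(\<exists>th. grunspan_map sc D eps br th) \<and>
         (\<forall>e. eps e = 1 \<longrightarrow> grunspan_map sc D eps br (grunspan_formula D br e))"
proof -
  interpret hopf_heap_space sc D eps br
    using assms by unfold_locales (simp add: hopf_heap_def)+
  show ?thesis using grunspan_map_theta exists_eps_eq_one by blast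
qed

end
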